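(* In the setting described in the context, for every $i$ with $1\le i\le m-1$, $L_2(f_i)\le L_1(p_i,q_i)+L_1(q_i,p_{i+1})$, where $L_1$ is the $L_1$ distance and $L_2(f_i)$ is the Euclidean length of the phase $f_i$.
   Context: $P$ is a finite set of points in the plane, $s,t\in P$ distinct, and coordinates are chosen so that $t=(0,0)$ and $s$ lies in $C_2^t$ below the line $\ell_t^-=\{x+y=0\}$. Cones: $C_0^v=\{x\ge v_x,y\le v_y\}$, $C_1^v=\{x\ge v_x,y\ge v_y\}$, $C_2^v=\{x\le v_x,y\ge v_y\}$, $C_3^v=\{x\le v_x,y\le v_y\}$ with bisector directions $(1,-1),(1,1),(-1,1),(-1,-1)$. The $\Theta_4$-graph of $P$ has, for each $v\in P$ and cone $C_i^v$ containing a point of $P\setminus\{v\}$, a directed edge from $v$ to a point $w$ of $(P\setminus\{v\})\cap C_i^v$ minimizing the projection of $w-v$ onto the bisector direction (the neighbour of $v$ in $C_i^v$). Algorithm: for a vertex $v$, let $T(v,\ell_t^-)=C_1^v\cap\{x+y\le0\}$ if $v_x+v_y<0$, $T(v,\ell_t^-)=C_3^v\cap\{x+y\ge0\}$ if $v_x+v_y>0$, and $\{v\}$ if $v_x+v_y=0$; $v$ is clean if $T(v,\ell_t^-)$ contains no point of $P$ other than $v$. Starting at $v=s$, while $v\ne t$: if $v$ is not clean, take a sweeping step (go to the neighbour of $v$ in $C_1^v$, resp. $C_3^v$); otherwise take a greedy step (go to the neighbour of $v$ in the cone $C_i^v$ containing $t$). Let $(p_1,q_1),\dots,(p_{m-1},q_{m-1})$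 be, in order, the edges traversed by greedy steps, and set $p_m=t$. The phase $f_i$ ($1\le i\le m-1$) is the subpath of the algorithm's path from $p_i$ to $p_{i+1}$. *)

theory Defs
  imports Complex_Main
begin

type_synonym point = "real \<times> real"

fun cone :: "nat \<Rightarrow> point \<Rightarrow> point set" where
  "cone 0 v = {p. fst p \<ge> fst v \<and> snd p \<le> snd v}"
| "cone (Suc 0) v = {p. fst p \<ge> fst v \<and> snd p \<ge> snd v}"
| "cone (Suc (Suc 0)) v = {p. fst p \<le> fst v \<and> snd p \<ge> snd v}"
| "cone _ v = {p. fst p \<le> fst v \<and> snd p \<le> snd v}"

fun bisector :: "nat \<Rightarrow> point" where
  "bisector 0 = (1, -1)"
| "bisector (Suc 0) = (1, 1)"
| "bisector (Suc (Suc 0)) = (-1, 1)"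
| "bisector _ = (-1, -1)"

definition proj :: "nat \<Rightarrow> point \<Rightarrow> point \<Rightarrow> real" where
  "proj i v w = ((fst w - fst v) * fst (bisector i) + (snd w - snd v) * snd (bisector i)) / sqrt 2"

definition is_nbr :: "point set \<Rightarrow> point \<Rightarrow> nat \<Rightarrow> point \<Rightarrow> bool" where
  "is_nbr P v i w \<longleftrightarrow> w \<in> P \<and> w \<noteq> v \<and> w \<in> cone i v \<and>
     (\<forall>u \<in> P. u \<noteq> v \<and> u \<in> cone i v \<longrightarrow> proj i v w \<le> proj i v u)"

definition theta4 :: "point set \<Rightarrow> (point \<Rightarrow> nat \<Rightarrow> point) \<Rightarrow> bool" where
  "theta4 P nb \<longleftrightarrow> (\<forall>v \<in> P. \<forall>i < 4. (\<exists>u \<in> P. u \<noteq> v \<and> u \<in> cone i v) \<longrightarrow> is_nbr P v i (nb v i))"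

definition Tri :: "point \<Rightarrow> point set" where
  "Tri v = (if fst v + snd v < 0 then cone 1 v \<inter> {p. fst p + snd p \<le> 0}
            else if fst v + snd v > 0 then cone 3 v \<inter> {p. fst p + snd p \<ge> 0}
            else {v})"

definition clean :: "point set \<Rightarrow> point \<Rightarrow> bool" where
  "clean P v \<longleftrightarrow> Tri v \<inter> P \<subseteq> {v}"

definition alg_step :: "point set \<Rightarrow> (point \<Rightarrow> nat \<Rightarrow> point) \<Rightarrow> point \<Rightarrow> point \<Rightarrow> point \<Rightarrow> bool" where
  "alg_step P nb t v w \<longleftrightarrow>
     (if \<not> clean P v then w = nb v (if fst v + snd v < 0 then 1 else 3)
      else (\<exists>i < 4. t \<in> cone i v \<and> w = nb v i))"

definition alg_run :: "point set \<Rightarrow> (point \<Rightarrow> nat \<Rightarrow> point) \<Rightarrow> point \<Rightarrow> point \<Rightarrow> point list \<Rightarrow> bool" where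
  "alg_run P nb s t vs \<longleftrightarrow> vs \<noteq> [] \<and> hd vs = s \<and> last vs = t \<and> t \<notin> set (butlast vs) \<and>
     (\<forall>k < length vs - 1. alg_step P nb t (vs ! k) (vs ! Suc k))"

definition greedy_idx :: "point set \<Rightarrow> point list \<Rightarrow> nat set" where
  "greedy_idx P vs = {k. k < length vs - 1 \<and> clean P (vs ! k)}"

definition phase_end :: "point set \<Rightarrow> point list \<Rightarrow> nat \<Rightarrow> nat" where
  "phase_end P vs a = (if \<exists>j. a < j \<and> j \<in> greedy_idx P vs
                        then (LEAST j. a < j \<and> j \<in> greedy_idx P vs) else length vs - 1)"

definition L1 :: "point \<Rightarrow> point \<Rightarrow> real" where
  "L1 p q = \<bar>fst p - fst q\<bar> + \<bar>snd p - snd q\<bar>"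

definition L2 :: "point \<Rightarrow> point \<Rightarrow> real" where
  "L2 p q = sqrt ((fst p - fst q)^2 + (snd p - snd q)^2)"

definition subpath_len :: "point list \<Rightarrow> nat \<Rightarrow> nat \<Rightarrow> real" where
  "subpath_len vs a b = (\<Sum>k \<in> {a..<b}. L2 (vs ! k) (vs ! Suc k))"

end

theory Submission
  imports Defs
begin

text \<open>The first step of a phase is the greedy edge, bounded trivially by its L1 length. Every
  later step is a sweeping step from an unclean vertex v; the neighbour it moves to minimises
  x + y over the cone C_1 (resp. maximises it over C_3), and the nonempty triangle T(v) supplies
  a point of that cone on the same side of the line x + y = 0, so the walk never crosses the line.
  It cannot land on the line either, since vertices on the line are clean. Hence all sweeping
  steps of a phase go in the same cone, both coordinates change monotonically, and the L1 lengths
  of these steps telescope to the L1 distance between their endpoints.\<close>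

lemma L2_le_L1: "L2 p q \<le> L1 p q"
  unfolding L2_def L1_def
proof (rule real_le_lsqrt)
  show "0 \<le> \<bar>fst p - fst q\<bar> + \<bar>snd p - snd q\<bar>" by simp
  have "(\<bar>fst p - fst q\<bar> + \<bar>snd p - snd q\<bar>)\<^sup>2
        = (fst p - fst q)\<^sup>2 + (snd p - snd q)\<^sup>2 + 2 * \<bar>fst p - fst q\<bar> * \<bar>snd p - snd q\<bar>"
    by (simp add: power2_eq_square algebra_simps abs_mult_self_eq)
  then show "(fst p - fst q)\<^sup>2 + (snd p - snd q)\<^sup>2 \<le> (\<bar>fst p - fst q\<bar> + \<bar>snd p - snd q\<bar>)\<^sup>2"
    by simp
qed

lemma sum_abs_diff_monotone:
  fixes x :: "nat \<Rightarrow> 'a::ordered_ab_group_add_abs"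
  assumes "m \<le> n"
    and "(\<forall>k\<in>{m..<n}. x k \<le> x (Suc k)) \<or> (\<forall>k\<in>{m..<n}. x (Suc k) \<le> x k)"
  shows "(\<Sum>k\<in>{m..<n}. \<bar>x (Suc k) - x k\<bar>) = \<bar>x n - x m\<bar>"
proof -
  have increasing: "(\<Sum>k\<in>{m..<n}. \<bar>y (Suc k) - y k\<bar>) = \<bar>y n - y m\<bar>"
    if "\<forall>k\<in>{m..<n}. y k \<le> y (Suc k)" for y :: "nat \<Rightarrow> 'a"
  proof -
    have "(\<Sum>k\<in>{m..<n}. \<bar>y (Suc k) - y k\<bar>) = (\<Sum>k\<in>{m..<n}. y (Suc k) - y k)"
      using that by (intro sum.cong) auto
    also have "\<dots> = y n - y m"
      using sum_Suc_diff'[OF assms(1)] .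
    finally have "(\<Sum>k\<in>{m..<n}. \<bar>y (Suc k) - y k\<bar>) = y n - y m" .
    moreover have "0 \<le> (\<Sum>k\<in>{m..<n}. \<bar>y (Suc k) - y k\<bar>)"
      by (rule sum_nonneg) simp
    ultimately show ?thesis by simp
  qed
  from assms(2) show ?thesis
  proof
    assume "\<forall>k\<in>{m..<n}. x (Suc k) \<le> x k"
    then show ?thesis
      using increasing[of "\<lambda>k. - x k"] by (simp add: abs_minus_commute)
  qed (rule increasing)
qed

lemma sum_L1_monotone_chain:
  assumes "m \<le> n"
    and "(\<forall>k\<in>{m..<n}. p (Suc k) \<in> cone 1 (p k)) \<or> (\<forall>k\<in>{m..<n}. p (Suc k) \<in> cone 3 (p k))"
  shows "(\<Sum>k\<in>{m..<n}. L1 (p k) (p (Suc k))) = L1 (p m) (p n)"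
proof -
  have "(\<forall>k\<in>{m..<n}. c (p k) \<le> c (p (Suc k))) \<or> (\<forall>k\<in>{m..<n}. c (p (Suc k)) \<le> c (p k))"
    if "c = fst \<or> c = snd" for c
    using assms(2) that by (auto simp: numeral_eq_Suc)
  then show ?thesis
    using sum_abs_diff_monotone[OF assms(1), of "\<lambda>k. fst (p k)"]
      sum_abs_diff_monotone[OF assms(1), of "\<lambda>k. snd (p k)"]
    by (simp add: L1_def sum.distrib abs_minus_commute)
qed

lemma theta4_is_nbr:
  assumes "theta4 P nb" "v \<in> P" "i < 4" "u \<in> P" "u \<noteq> v" "u \<in> cone i v"
  shows "is_nbr P v i (nb v i)"
  using assms unfolding theta4_def by blast

lemma sweeping_step:
  assumes theta: "theta4 P nb" and "v \<in> P" and unclean: "\<not> clean P v"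
    and step: "alg_step P nb t v w"
  shows "w \<in> P \<and>
    (fst v + snd v < 0 \<and> w \<in> cone 1 v \<and> fst w + snd w \<le> 0 \<or>
     fst v + snd v > 0 \<and> w \<in> cone 3 v \<and> fst w + snd w \<ge> 0)"
proof -
  obtain u where u: "u \<in> Tri v" "u \<in> P" "u \<noteq> v"
    using unclean unfolding clean_def by auto
  then consider (below) "fst v + snd v < 0" | (above) "fst v + snd v > 0"
    unfolding Tri_def by (auto split: if_splits)
  then show ?thesis
  proof cases
    case below
    have w: "w = nb v 1" using step unclean below unfolding alg_step_def by simp
    have u_cone: "u \<in> cone 1 v" "fst u + snd u \<le> 0" using u below unfolding Tri_def by auto
    have "is_nbr P v 1 w" using theta4_is_nbr[OF theta \<open>v \<in> P\<close> _ u(2,3) u_cone(1)] w by simp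
    then have "w \<in> P" "w \<in> cone 1 v" "proj 1 v w \<le> proj 1 v u"
      using u u_cone unfolding is_nbr_def by auto
    moreover from this(3) have "fst w + snd w \<le> fst u + snd u"
      by (simp add: proj_def divide_le_cancel)
    ultimately show ?thesis using below u_cone by auto
  next
    case above
    have w: "w = nb v 3" using step unclean above unfolding alg_step_def by simp
    have u_cone: "u \<in> cone 3 v" "fst u + snd u \<ge> 0" using u above unfolding Tri_def by auto
    have "is_nbr P v 3 w" using theta4_is_nbr[OF theta \<open>v \<in> P\<close> _ u(2,3) u_cone(1)] w by simp
    then have "w \<in> P" "w \<in> cone 3 v" "proj 3 v w \<le> proj 3 v u"
      using u u_cone unfolding is_nbr_def by auto
    moreover from this(3) have "fst w + snd w \<ge> fst u + snd u"
      by (simp add: proj_def numeral_eq_Suc divide_le_cancel)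
    ultimately show ?thesis using above u_cone by auto
  qed
qed

lemma greedy_step_mem:
  assumes "theta4 P nb" "v \<in> P" "t \<in> P" "v \<noteq> t" "clean P v" "alg_step P nb t v w"
  shows "w \<in> P"
proof -
  obtain i where "i < 4" "t \<in> cone i v" "w = nb v i"
    using assms(5,6) unfolding alg_step_def by auto
  then have "is_nbr P v i w" using theta4_is_nbr assms(1-4) by metis
  then show ?thesis unfolding is_nbr_def by simp
qed

lemma alg_run_step:
  assumes "alg_run P nb s t vs" "k < length vs - 1"
  shows "alg_step P nb t (vs ! k) (vs ! Suc k)" "vs ! k \<noteq> t"
proof -
  show "alg_step P nb t (vs ! k) (vs ! Suc k)" using assms unfolding alg_run_def by simp
  have "vs ! k \<in> set (butlast vs)" using assms(2) by (metis length_butlast nth_butlast nth_mem)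
  then show "vs ! k \<noteq> t" using assms(1) unfolding alg_run_def by auto
qed

lemma alg_run_mem:
  assumes theta: "theta4 P nb" and run: "alg_run P nb s t vs" and "s \<in> P" "t \<in> P"
  shows "k < length vs \<Longrightarrow> vs ! k \<in> P"
proof (induction k)
  case 0
  then show ?case using run \<open>s \<in> P\<close> unfolding alg_run_def by (metis hd_conv_nth)
next
  case (Suc k)
  then have k: "k < length vs - 1" "vs ! k \<in> P" by simp_all
  note step = alg_run_step[OF run k(1)]
  show ?case
    using sweeping_step[OF theta k(2) _ step(1)] greedy_step_mem[OF theta k(2) \<open>t \<in> P\<close> step(2) _ step(1)]
    by blast
qed

lemma sweeping_chain_monotone:
  assumes theta: "theta4 P nb"
    and sweeping: "\<And>k. m \<le> k \<Longrightarrow> k < n \<Longrightarrow>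
      p k \<in> P \<and> \<not> clean P (p k) \<and> alg_step P nb t (p k) (p (Suc k))"
  shows "(\<forall>k\<in>{m..<n}. p (Suc k) \<in> cone 1 (p k)) \<or> (\<forall>k\<in>{m..<n}. p (Suc k) \<in> cone 3 (p k))"
proof -
  let ?h = "\<lambda>k. fst (p k) + snd (p k)"
  have side_step: "?h k < 0 \<and> p (Suc k) \<in> cone 1 (p k) \<and> ?h (Suc k) \<le> 0 \<or>
              ?h k > 0 \<and> p (Suc k) \<in> cone 3 (p k) \<and> ?h (Suc k) \<ge> 0"
    if "m \<le> k" "k < n" for k
    using sweeping_step[OF theta] sweeping[OF that] by blast
  have same_side: "k < n \<longrightarrow> sgn (?h k) = sgn (?h m)" if "m \<le> k" for k
    using that
  proof (induction k rule: dec_induct)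
    case (step k)
    have "sgn (?h (Suc k)) = sgn (?h k)" if "Suc k < n"
      using that step.hyps side_step[of k] side_step[of "Suc k"] by (auto simp: sgn_if)
    then show ?case using step by auto
  qed simp
  show ?thesis
  proof (cases "m < n")
    case True
    then have "?h m \<noteq> 0" using side_step[of m] by auto
    then consider "?h m < 0" | "?h m > 0" by linarith
    then show ?thesis
    proof cases
      case 1
      have "p (Suc k) \<in> cone 1 (p k)" if "m \<le> k" "k < n" for k
        using 1 same_side[OF that(1)] side_step[OF that] that(2) by (auto simp: sgn_if split: if_splits)
      then show ?thesis by simp
    next
      case 2
      have "p (Suc k) \<in> cone 3 (p k)" if "m \<le> k" "k < n" for k
        using 2 same_side[OF that(1)] side_step[OF that] that(2) by (auto simp: sgn_if split: if_splits)
      then show ?thesis by simp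
    qed
  qed simp
qed

lemma phase_end_next_greedy:
  assumes "a \<in> greedy_idx P vs"
  shows "a < phase_end P vs a" "phase_end P vs a \<le> length vs - 1"
    and "\<And>k. a < k \<Longrightarrow> k < phase_end P vs a \<Longrightarrow> k \<notin> greedy_idx P vs"
proof -
  have "a < phase_end P vs a \<and> phase_end P vs a \<le> length vs - 1 \<and>
        (\<forall>k. a < k \<and> k < phase_end P vs a \<longrightarrow> k \<notin> greedy_idx P vs)"
  proof (cases "\<exists>j. a < j \<and> j \<in> greedy_idx P vs")
    case True
    let ?j = "LEAST j. a < j \<and> j \<in> greedy_idx P vs"
    have e: "phase_end P vs a = ?j" using True unfolding phase_end_def by simp
    have j: "a < ?j \<and> ?j \<in> greedy_idx P vs" using True by (rule LeastI_ex)
    then have "?j \<le> length vs - 1" unfolding greedy_idx_def by simp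
    moreover have "k \<notin> greedy_idx P vs" if "a < k" "k < ?j" for k
      using not_less_Least[of k] that by blast
    ultimately show ?thesis using e j by simp
  next
    case False
    moreover have "a < length vs - 1" using assms unfolding greedy_idx_def by simp
    ultimately show ?thesis unfolding phase_end_def by auto
  qed
  then show "a < phase_end P vs a" "phase_end P vs a \<le> length vs - 1"
    and "\<And>k. a < k \<Longrightarrow> k < phase_end P vs a \<Longrightarrow> k \<notin> greedy_idx P vs"
    by blast+
qed

lemma unclean_inside_phase:
  assumes "a \<in> greedy_idx P vs" "a < k" "k < phase_end P vs a"
  shows "\<not> clean P (vs ! k)"
  using phase_end_next_greedy[OF assms(1)] assms(2,3) unfolding greedy_idx_def by auto

theorem mainTheorem7:
  fixes P :: "point set" and s t :: point and nb :: "point \<Rightarrow> nat \<Rightarrow> point" and vs :: "point list"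
  assumes "finite P" and "s \<in> P" and "t \<in> P" and "s \<noteq> t"
    and "t = (0, 0)" and "s \<in> cone 2 t" and "fst s + snd s < 0"
    and "theta4 P nb"
    and "alg_run P nb s t vs"
    and "a \<in> greedy_idx P vs"
  shows "subpath_len vs a (phase_end P vs a)
           \<le> L1 (vs ! a) (vs ! Suc a) + L1 (vs ! Suc a) (vs ! phase_end P vs a)"
proof -
  define e where "e = phase_end P vs a"
  note e_bounds = phase_end_next_greedy[OF assms(10), folded e_def]
  have sweeping: "vs ! k \<in> P \<and> \<not> clean P (vs ! k) \<and> alg_step P nb t (vs ! k) (vs ! Suc k)"
    if "Suc a \<le> k" "k < e" for k
  proof -
    have "k < length vs - 1" using that e_bounds(2) by simp
    then show ?thesis
      using that alg_run_mem[OF assms(8,9,2,3), of k] alg_run_step(1)[OF assms(9)]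
        unclean_inside_phase[OF assms(10), of k] by (simp add: e_def)
  qed
  have "subpath_len vs a e \<le> (\<Sum>k\<in>{a..<e}. L1 (vs ! k) (vs ! Suc k))"
    unfolding subpath_len_def by (intro sum_mono L2_le_L1)
  also have "\<dots> = L1 (vs ! a) (vs ! Suc a) + (\<Sum>k\<in>{Suc a..<e}. L1 (vs ! k) (vs ! Suc k))"
    using e_bounds(1) by (simp add: sum.atLeast_Suc_lessThan)
  also have "(\<Sum>k\<in>{Suc a..<e}. L1 (vs ! k) (vs ! Suc k)) = L1 (vs ! Suc a) (vs ! e)"
    using e_bounds(1) sweeping_chain_monotone[where p = "(!) vs", OF assms(8) sweeping]
    by (intro sum_L1_monotone_chain) simp_all
  finally show ?thesis unfolding e_def .
qed

end
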